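(* Fix $\lambda\ge0$ and an integer $\Delta_{\max}\ge1$. Consider the average-cost Markov decision process with state space $S=\{0,1,\dots,\Delta_{\max}\}$, action set $\{0,1\}$, transition probabilities $\mathbb{P}(\Delta'\mid\Delta,a)$ given in the context, and transition cost $C_\lambda(\Delta,a,\Delta')=\Delta'+\lambda a$, i.e., the problem of finding a policy $\pi$ minimizing $\lim_{T\to\infty}\frac1T\mathbb{E}\big[\sum_{t=0}^{T-1}\{\Delta(t)+\lambda a(t)\}\mid s(0)\big]$. Then an optimal policy of this MDP is a threshold policy: there is $\Delta_T$ such that the optimal action is $a=1$ for all states $\Delta\ge\Delta_T$ and $a=0$ for $\Delta<\Delta_T$.
   Context: Let $0<p_s<1$, $0<p_g<1$, $\bar p_s=1-p_s$, $\bar p_g=1-p_g$. The state $\Delta$ is a (truncated) Version Age of Information. The transition probabilities are: for $a=0$: $\mathbb{P}(\Delta+1\mid\Delta,0)=p_g$ and $\mathbb{P}(\Delta\mid\Delta,0)=\bar p_g$ if $\Delta<\Delta_{\max}$, and $\mathbb{P}(\Delta_{\max}\mid\Delta_{\max},0)=1$; for $a=1$: $\mathbb{P}(\Delta+1\mid\Delta,1)=\bar p_s p_g$ and $\mathbb{P}(\Delta\mid\Delta,1)=\bar p_s\bar p_g$ if $\Delta<\Delta_{\max}$, $\mathbb{P}(\Delta_{\max}\mid\Delta_{\max},1)=\bar p_s$, and in all states $\mathbb{P}(1\mid\Delta,1)=p_sp_g$, $\mathbb{P}(0\mid\Delta,1)=p_s\bar p_g$ (probabilities of coinciding target states add). 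*)

theory Defs
  imports Complex_Main "HOL-Library.Extended_Real" "HOL-Library.Liminf_Limsup"
begin

text \<open>Transition probability P(s' | s, a) of the truncated Version-AoI MDP with
  parameters ps, pg, Dmax. States are 0..Dmax, actions are 0 and 1.
  Probabilities of coinciding target states add up.\<close>
definition vaoi_trans :: "real \<Rightarrow> real \<Rightarrow> nat \<Rightarrow> nat \<Rightarrow> nat \<Rightarrow> nat \<Rightarrow> real" where
  "vaoi_trans ps pg Dmax s a s' =
     (if a = 0 then
        (if s < Dmax then pg * (if s' = s + 1 then 1 else 0) + (1 - pg) * (if s' = s then 1 else 0)
         else (if s' = Dmax then 1 else 0))
      else
        (if s < Dmax then (1 - ps) * pg * (if s' = s + 1 then 1 else 0)
                         + (1 - ps) * (1 - pg) * (if s' = s then 1 else 0)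
         else (1 - ps) * (if s' = Dmax then 1 else 0))
        + ps * pg * (if s' = 1 then 1 else 0) + ps * (1 - pg) * (if s' = 0 then 1 else 0))"

text \<open>A (general, history-dependent, randomized) policy maps the history of past
  (state, action) pairs and the current state to the probability of taking action 1.\<close>
type_synonym policy = "(nat \<times> nat) list \<Rightarrow> nat \<Rightarrow> real"

definition valid_policy :: "policy \<Rightarrow> bool" where
  "valid_policy \<pi> \<longleftrightarrow> (\<forall>h s. 0 \<le> \<pi> h s \<and> \<pi> h s \<le> 1)"

definition act_prob :: "policy \<Rightarrow> (nat \<times> nat) list \<Rightarrow> nat \<Rightarrow> nat \<Rightarrow> real" where
  "act_prob \<pi> h s a = (if a = 1 then \<pi> h s else 1 - \<pi> h s)"

fun exp_cost :: "real \<Rightarrow> real \<Rightarrow> nat \<Rightarrow> real \<Rightarrow> policy \<Rightarrow> (nat \<times> nat) list \<Rightarrow> nat \<Rightarrow> nat \<Rightarrow> real" where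
  "exp_cost ps pg Dmax lam \<pi> h s 0 = 0"
| "exp_cost ps pg Dmax lam \<pi> h s (Suc T) =
     (\<Sum>a\<in>{0,1::nat}. act_prob \<pi> h s a *
        (real s + lam * real a +
         (\<Sum>s'\<in>{0..Dmax}. vaoi_trans ps pg Dmax s a s' *
              exp_cost ps pg Dmax lam \<pi> (h @ [(s, a)]) s' T)))"

definition avg_cost :: "real \<Rightarrow> real \<Rightarrow> nat \<Rightarrow> real \<Rightarrow> policy \<Rightarrow> nat \<Rightarrow> ereal" where
  "avg_cost ps pg Dmax lam \<pi> s =
     limsup (\<lambda>T. ereal (exp_cost ps pg Dmax lam \<pi> [] s T / real T))"

definition threshold_policy :: "nat \<Rightarrow> policy" where
  "threshold_policy DT = (\<lambda>h s. if DT \<le> s then 1 else 0)"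

end

theory Submission
  imports Defs
begin

(* The proof exhibits a solution (g, h) of the average-cost optimality equation
     h s + g = min over a of (s + lam a + sum_s' P(s' | s, a) h s').
   Then every policy has expected T-step cost at least T g + h s (as h <= 0), while the policy
   taking the minimising actions has cost at most T g + h s - h 0, so both average costs compare
   with g.  The equation is solved backwards from h Dmax = 0, treating the expected bias
   c = pg h 1 + (1 - pg) h 0 after a reset as a parameter; c is then fixed by the intermediate
   value theorem.  A one-step comparison shows that h is nondecreasing, and action 1 is optimal
   at s iff lam + ps c <= ps m s, where m s is the expected bias after a step without reset;
   m is nondecreasing in s, which yields the threshold. *)

lemma min_affine_fixpoints:
  fixes u v k l :: real
  assumes "k < 1" "l < 1"
  defines "x \<equiv> min (u / (1 - k)) (v / (1 - l))"
  shows "x = min (u + k * x) (v + l * x)"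
proof -
  define A B where "A = u / (1 - k)" and "B = v / (1 - l)"
  have A: "u + k * A = A" and B: "v + l * B = B"
    using assms by (simp_all add: A_def B_def field_simps)
  have "A \<le> v + l * A" if "A \<le> B"
  proof -
    have "0 \<le> (1 - l) * (B - A)" using that assms by simp
    then show ?thesis using B by (simp add: algebra_simps)
  qed
  moreover have "B \<le> u + k * B" if "B \<le> A"
  proof -
    have "0 \<le> (1 - k) * (A - B)" using that assms by simp
    then show ?thesis using A by (simp add: algebra_simps)
  qed
  ultimately show ?thesis
    unfolding x_def A_def[symmetric] B_def[symmetric] using A B by (auto simp: min_def)
qed

lemma min_affine_diff_le:
  fixes k :: real
  assumes "0 \<le> k" "k \<le> 1"
  shows "min x (L + k * x) - min y (L + k * y) \<le> max 0 (x - y)"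
proof (cases "x \<le> y")
  case True
  then have "k * x \<le> k * y" using assms by (simp add: mult_left_mono)
  then show ?thesis using True by (auto simp: min_def max_def)
next
  case False
  then have "k * (x - y) \<le> x - y" using assms by (simp add: mult_left_le_one_le)
  then show ?thesis using False by (auto simp: min_def max_def algebra_simps)
qed

lemma convex_bound_ge:
  fixes a x y u v :: real
  assumes "a \<le> x" "a \<le> y" "0 \<le> u" "0 \<le> v" "u + v = 1"
  shows "a \<le> u * x + v * y"
  using convex_bound_le[of "- x" "- a" "- y" u v] assms by simp

lemma upward_closed_threshold:
  fixes N :: nat
  assumes "\<And>s t. s \<le> t \<Longrightarrow> t \<le> N \<Longrightarrow> P s \<Longrightarrow> P t"
  shows "\<exists>D. \<forall>s\<le>N. D \<le> s \<longleftrightarrow> P s"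
proof (intro exI allI impI)
  define D where "D = (LEAST k. N < k \<or> P k)"
  fix s assume "s \<le> N"
  show "D \<le> s \<longleftrightarrow> P s"
  proof
    assume "D \<le> s"
    have "N < D \<or> P D" unfolding D_def by (rule LeastI[of _ "Suc N"]) simp
    then show "P s" using assms \<open>D \<le> s\<close> \<open>s \<le> N\<close> by auto
  qed (simp add: D_def Least_le)
qed

lemma limsup_plus_const_over_n: "limsup (\<lambda>T. ereal (x + K / real T)) = ereal x"
proof (rule lim_imp_Limsup)
  have "(\<lambda>T. x + K / real T) \<longlonglongrightarrow> x + 0"
    by (intro tendsto_intros lim_const_over_n)
  then show "(\<lambda>T. ereal (x + K / real T)) \<longlonglongrightarrow> ereal x" by simp
qed simp

lemma avg_cost_ge:
  assumes "\<And>T. real T * g + b \<le> exp_cost ps pg N lam \<pi> [] s T"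
  shows "ereal g \<le> avg_cost ps pg N lam \<pi> s"
proof -
  have "ereal g = limsup (\<lambda>T. ereal (g + b / real T))"
    by (rule limsup_plus_const_over_n[symmetric])
  also have "\<dots> \<le> avg_cost ps pg N lam \<pi> s"
    unfolding avg_cost_def
  proof (intro Limsup_mono eventually_sequentiallyI[of 1])
    fix T :: nat assume "1 \<le> T"
    then have "g + b / real T = (real T * g + b) / real T" by (simp add: field_simps)
    also have "\<dots> \<le> exp_cost ps pg N lam \<pi> [] s T / real T"
      using assms by (intro divide_right_mono) auto
    finally show "ereal (g + b / real T) \<le> ereal (exp_cost ps pg N lam \<pi> [] s T / real T)"
      by simp
  qed
  finally show ?thesis .
qed

lemma avg_cost_le:
  assumes "\<And>T. exp_cost ps pg N lam \<pi> [] s T \<le> real T * g + b"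
  shows "avg_cost ps pg N lam \<pi> s \<le> ereal g"
proof -
  have "avg_cost ps pg N lam \<pi> s \<le> limsup (\<lambda>T. ereal (g + b / real T))"
    unfolding avg_cost_def
  proof (intro Limsup_mono eventually_sequentiallyI[of 1])
    fix T :: nat assume "1 \<le> T"
    have "exp_cost ps pg N lam \<pi> [] s T / real T \<le> (real T * g + b) / real T"
      using assms by (intro divide_right_mono) auto
    also have "\<dots> = g + b / real T" using \<open>1 \<le> T\<close> by (simp add: field_simps)
    finally show "ereal (exp_cost ps pg N lam \<pi> [] s T / real T) \<le> ereal (g + b / real T)"
      by simp
  qed
  also have "\<dots> = ereal g" by (rule limsup_plus_const_over_n)
  finally show ?thesis .
qed

lemma sum_indicator_mult:
  "k \<le> (N::nat) \<Longrightarrow> (\<Sum>s'\<in>{0..N}. (if s' = k then 1 else 0) * (f s' :: real)) = f k"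
  by (simp add: if_distrib[of "\<lambda>x. x * _"] cong: if_cong)

lemma sum_vaoi_trans:
  fixes f :: "nat \<Rightarrow> real"
  assumes "s \<le> N" "1 \<le> N"
  shows "(\<Sum>s'\<in>{0..N}. vaoi_trans ps pg N s a s' * f s') =
    (if a = 0 then (if s < N then pg * f (s + 1) + (1 - pg) * f s else f N)
     else (1 - ps) * (if s < N then pg * f (s + 1) + (1 - pg) * f s else f N)
       + ps * (pg * f 1 + (1 - pg) * f 0))"
  using assms
  by (simp add: vaoi_trans_def distrib_left distrib_right sum.distrib mult.assoc
      sum_distrib_left[symmetric] sum_indicator_mult)

locale vaoi_mdp =
  fixes ps pg lam :: real and N :: nat
  assumes ps: "0 < ps" "ps < 1" and pg: "0 < pg" "pg < 1"
    and lam_nonneg: "0 \<le> lam" and N_pos: "1 \<le> N"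
begin

lemma vaoi_trans_nonneg: "0 \<le> vaoi_trans ps pg N s a s'"
  unfolding vaoi_trans_def using ps pg by (auto intro!: add_nonneg_nonneg mult_nonneg_nonneg)

lemma sum_vaoi_trans_plus_const:
  assumes "s \<le> N"
  shows "(\<Sum>s'\<in>{0..N}. vaoi_trans ps pg N s a s' * (K + f s')) =
    K + (\<Sum>s'\<in>{0..N}. vaoi_trans ps pg N s a s' * f s')"
proof -
  have "(\<Sum>s'\<in>{0..N}. vaoi_trans ps pg N s a s' * K) = K"
    using sum_vaoi_trans[OF assms N_pos, of ps pg a "\<lambda>_. K"] by (simp add: algebra_simps)
  then show ?thesis by (simp add: distrib_left sum.distrib)
qed

lemma exp_cost_ge:
  assumes "valid_policy \<pi>" "s \<le> N"
    and subsolution: "\<And>s a. s \<le> N \<Longrightarrow> a \<le> 1 \<Longrightarrow>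
      h s + g \<le> real s + lam * real a + (\<Sum>s'\<in>{0..N}. vaoi_trans ps pg N s a s' * h s')"
    and h_nonpos: "\<And>s. s \<le> N \<Longrightarrow> h s \<le> 0"
  shows "real T * g + h s \<le> exp_cost ps pg N lam \<pi> hist s T"
  using assms(2)
proof (induction T arbitrary: hist s)
  case 0
  then show ?case using h_nonpos by simp
next
  case (Suc T)
  let ?X = "\<lambda>a. real s + lam * real a +
      (\<Sum>s'\<in>{0..N}. vaoi_trans ps pg N s a s' * exp_cost ps pg N lam \<pi> (hist @ [(s, a)]) s' T)"
  have step: "real (Suc T) * g + h s \<le> ?X a" if "a \<le> 1" for a
  proof -
    have "real (Suc T) * g + h s \<le>
        real s + lam * real a + (real T * g + (\<Sum>s'\<in>{0..N}. vaoi_trans ps pg N s a s' * h s'))"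
      using subsolution[OF Suc.prems that] by (simp add: algebra_simps)
    also have "\<dots> = real s + lam * real a +
        (\<Sum>s'\<in>{0..N}. vaoi_trans ps pg N s a s' * (real T * g + h s'))"
      using sum_vaoi_trans_plus_const[OF Suc.prems] by simp
    also have "\<dots> \<le> ?X a"
      using Suc.IH by (intro add_left_mono sum_mono mult_left_mono vaoi_trans_nonneg) auto
    finally show ?thesis .
  qed
  have "0 \<le> \<pi> hist s" "\<pi> hist s \<le> 1" using \<open>valid_policy \<pi>\<close> by (auto simp: valid_policy_def)
  with step[of 0] step[of 1]
  have "(1 - \<pi> hist s) * (real (Suc T) * g + h s) + \<pi> hist s * (real (Suc T) * g + h s)
      \<le> (1 - \<pi> hist s) * ?X 0 + \<pi> hist s * ?X 1"
    by (intro add_mono[OF mult_left_mono mult_left_mono]) auto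
  also have "\<dots> = exp_cost ps pg N lam \<pi> hist s (Suc T)"
    by (simp add: act_prob_def)
  finally show ?case by (simp add: algebra_simps)
qed

lemma exp_cost_threshold_le:
  assumes "s \<le> N"
    and solution: "\<And>s. s \<le> N \<Longrightarrow> real s + lam * real (if D \<le> s then 1 else 0) +
      (\<Sum>s'\<in>{0..N}. vaoi_trans ps pg N s (if D \<le> s then 1 else 0) s' * h s') = h s + g"
    and h_lower: "\<And>s. s \<le> N \<Longrightarrow> m \<le> h s"
  shows "exp_cost ps pg N lam (threshold_policy D) hist s T \<le> real T * g + h s - m"
  using assms(1)
proof (induction T arbitrary: hist s)
  case 0
  then show ?case using h_lower by simp
next
  case (Suc T)
  define a where "a = (if D \<le> s then 1 else 0 :: nat)"
  have "exp_cost ps pg N lam (threshold_policy D) hist s (Suc T) = real s + lam * real a +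
      (\<Sum>s'\<in>{0..N}. vaoi_trans ps pg N s a s' *
        exp_cost ps pg N lam (threshold_policy D) (hist @ [(s, a)]) s' T)"
    by (simp add: act_prob_def threshold_policy_def a_def)
  also have "\<dots> \<le> real s + lam * real a +
      (\<Sum>s'\<in>{0..N}. vaoi_trans ps pg N s a s' * ((real T * g - m) + h s'))"
    using Suc.IH
    by (intro add_left_mono sum_mono mult_left_mono vaoi_trans_nonneg) (auto simp: algebra_simps)
  also have "\<dots> = real T * g - m + (h s + g)"
    using sum_vaoi_trans_plus_const[OF Suc.prems] solution[OF Suc.prems] by (simp add: a_def)
  finally show ?case by (simp add: algebra_simps)
qed

lemma stay_prob_lt_1: "(1 - ps) * (1 - pg) < 1"
proof -
  have "(1 - ps) * (1 - pg) < 1 * 1" using ps pg by (intro mult_strict_mono) auto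
  then show ?thesis by simp
qed

(* Here c stands for the expected bias after a reset.  For s < N, bias c s is the unique
   solution x of the optimality equation at s,
     x + gain c = s + min m (lam + ps c + (1 - ps) m),   m = pg * bias c (s + 1) + (1 - pg) x,
   written as the minimum of the fixed points of the two affine maps (min_affine_fixpoints);
   gain c is forced by the equation at s = N, where bias c N = 0. *)
definition gain :: "real \<Rightarrow> real" where
  "gain c = real N + min 0 (lam + ps * c)"

function bias :: "real \<Rightarrow> nat \<Rightarrow> real" where
  "bias c s = (if s < N then
     min ((real s - gain c + pg * bias c (Suc s)) / pg)
       ((real s - gain c + lam + ps * c + (1 - ps) * pg * bias c (Suc s)) / (1 - (1 - ps) * (1 - pg)))
   else 0)"
  by auto
termination by (relation "measure (\<lambda>(c, s). N - s)") auto

declare bias.simps [simp del]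

definition bias_next :: "real \<Rightarrow> nat \<Rightarrow> real" where
  "bias_next c s = (if s < N then pg * bias c (Suc s) + (1 - pg) * bias c s else bias c N)"

lemma bias_optimality:
  assumes "s \<le> N"
  shows "bias c s + gain c = real s + min (bias_next c s) (lam + ps * c + (1 - ps) * bias_next c s)"
proof (cases "s < N")
  case True
  let ?b = "bias c (Suc s)"
  have "bias c s = min ((real s - gain c + pg * ?b) / (1 - (1 - pg)))
      ((real s - gain c + lam + ps * c + (1 - ps) * pg * ?b) / (1 - (1 - ps) * (1 - pg)))"
    using True by (simp add: bias.simps[of c s])
  then have "bias c s = min (real s - gain c + pg * ?b + (1 - pg) * bias c s)
      (real s - gain c + lam + ps * c + (1 - ps) * pg * ?b + (1 - ps) * (1 - pg) * bias c s)"
    using min_affine_fixpoints[of "1 - pg" "(1 - ps) * (1 - pg)"] pg stay_prob_lt_1 by simp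
  then have "bias c s = (real s - gain c) + min (bias_next c s) (lam + ps * c + (1 - ps) * bias_next c s)"
    using True unfolding min_add_distrib_right by (simp add: bias_next_def algebra_simps)
  then show ?thesis by simp
qed (use assms in \<open>simp add: bias.simps bias_next_def gain_def min_def\<close>)

lemma bias_continuous: "continuous_on UNIV (\<lambda>c. bias c s)"
proof (induction "N - s" arbitrary: s)
  case 0
  then show ?case by (simp add: bias.simps)
next
  case (Suc k)
  then have "s < N" "continuous_on UNIV (\<lambda>c. bias c (Suc s))" by simp_all
  moreover have "1 - (1 - ps) * (1 - pg) \<noteq> 0" using stay_prob_lt_1 by simp
  ultimately show ?case
    using pg by (subst bias.simps) (auto simp: gain_def intro!: continuous_intros)
qed

lemma bias_nonpos: "bias c s \<le> 0"
proof (induction c s rule: bias.induct)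
  case (1 c s)
  show ?case
  proof (cases "s < N")
    case True
    then have "real s \<le> real N" and b: "bias c (Suc s) \<le> 0" using "1" by simp_all
    then have "pg * bias c (Suc s) \<le> 0" "(1 - ps) * pg * bias c (Suc s) \<le> 0"
      using ps pg by (simp_all add: mult_nonneg_nonpos)
    show ?thesis
    proof (cases "0 \<le> lam + ps * c")
      case True
      have "(real s - gain c + pg * bias c (Suc s)) / pg \<le> 0"
        using \<open>real s \<le> real N\<close> \<open>pg * bias c (Suc s) \<le> 0\<close> True pg
        by (intro divide_nonpos_pos) (auto simp: gain_def)
      then show ?thesis using \<open>s < N\<close> by (simp add: bias.simps[of c s])
    next
      case False
      have "(real s - gain c + lam + ps * c + (1 - ps) * pg * bias c (Suc s))
          / (1 - (1 - ps) * (1 - pg)) \<le> 0"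
        using \<open>real s \<le> real N\<close> \<open>(1 - ps) * pg * bias c (Suc s) \<le> 0\<close> False stay_prob_lt_1
        by (intro divide_nonpos_pos) (auto simp: gain_def)
      then show ?thesis using \<open>s < N\<close> by (simp add: bias.simps[of c s])
    qed
  qed (simp add: bias.simps)
qed

lemma bias_lower_bound:
  assumes "lam + ps * c \<le> 0"
  shows "- (real (N - s) * (real N / pg)) \<le> bias c s"
  using assms
proof (induction c s rule: bias.induct)
  case (1 c s)
  show ?case
  proof (cases "s < N")
    case True
    define b where "b = bias c (Suc s)"
    define d where "d = 1 - (1 - ps) * (1 - pg)"
    have IH: "- (real (N - Suc s) * (real N / pg)) \<le> b" using "1" True by (simp add: b_def)
    have "b \<le> 0" using bias_nonpos by (simp add: b_def)
    have gain: "gain c = real N + lam + ps * c" using "1.prems" by (auto simp: gain_def min_def)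
    have "d = pg + ps * (1 - pg)" by (simp add: d_def algebra_simps)
    moreover have "0 \<le> ps * (1 - pg)" "(1 - ps) * pg \<le> pg"
      using ps pg by (simp_all add: mult_left_le_one_le)
    ultimately have "pg \<le> d" "(1 - ps) * pg \<le> d" by linarith+
    have "0 < d" using stay_prob_lt_1 by (simp add: d_def)
    have "- real N / pg \<le> (real s - gain c) / pg"
      using "1.prems" pg by (intro divide_right_mono) (auto simp: gain)
    moreover have "(real s - gain c + pg * b) / pg = (real s - gain c) / pg + b"
      using pg by (simp add: add_divide_distrib)
    ultimately have first: "b - real N / pg \<le> (real s - gain c + pg * b) / pg" by simp
    have "real N \<le> d * (real N / pg)"
      using mult_right_mono[OF \<open>pg \<le> d\<close>, of "real N"] pg by (simp add: pos_le_divide_eq mult.commute)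
    moreover have "d * b \<le> (1 - ps) * pg * b"
      using \<open>(1 - ps) * pg \<le> d\<close> \<open>b \<le> 0\<close> by (rule mult_right_mono_neg)
    ultimately have "(b - real N / pg) * d \<le> real s - gain c + lam + ps * c + (1 - ps) * pg * b"
      by (simp add: gain algebra_simps)
    then have second: "b - real N / pg \<le> (real s - gain c + lam + ps * c + (1 - ps) * pg * b) / d"
      using \<open>0 < d\<close> by (simp add: pos_le_divide_eq)
    have "- (real (N - s) * (real N / pg)) = - (real (N - Suc s) * (real N / pg)) - real N / pg"
      using True pg by (simp add: of_nat_diff field_simps)
    also have "\<dots> \<le> bias c s"
      using IH first second True by (simp add: bias.simps[of c s] b_def d_def)
    finally show ?thesis .
  qed (simp add: bias.simps)
qed

lemma exists_bias_reset_fixpoint: "\<exists>c. pg * bias c 1 + (1 - pg) * bias c 0 = c"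
proof -
  define f where "f c = pg * bias c 1 + (1 - pg) * bias c 0 - c" for c
  define c0 where "c0 = - lam / ps - real N * (real N / pg)"
  have "0 \<le> real N * (real N / pg)" "0 \<le> lam / ps" using pg ps lam_nonneg by simp_all
  then have "c0 \<le> 0" by (simp add: c0_def)
  have "lam + ps * c0 = - ps * (real N * (real N / pg))"
    using ps by (simp add: c0_def field_simps)
  also have "\<dots> \<le> 0"
    using mult_nonneg_nonneg[OF _ \<open>0 \<le> real N * (real N / pg)\<close>, of ps] ps by linarith
  finally have "- (real (N - s) * (real N / pg)) \<le> bias c0 s" for s
    by (rule bias_lower_bound)
  moreover have "real N * (real N / pg) \<ge> real (N - s) * (real N / pg)" for s
    using pg by (intro mult_right_mono) auto
  ultimately have "- (real N * (real N / pg)) \<le> bias c0 s" for s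
    by (meson neg_le_iff_le order_trans)
  then have "- (real N * (real N / pg)) \<le> pg * bias c0 1 + (1 - pg) * bias c0 0"
    using pg by (intro convex_bound_ge) auto
  then have "0 \<le> f c0" using \<open>0 \<le> lam / ps\<close> by (simp add: f_def c0_def)
  moreover have "f 0 \<le> 0"
    using bias_nonpos[of 0] pg by (simp add: f_def add_nonpos_nonpos mult_nonneg_nonpos)
  moreover have "continuous_on {c0..0} f"
    unfolding f_def by (intro continuous_intros continuous_on_subset[OF bias_continuous]) auto
  ultimately obtain c where "f c = 0" using IVT2'[of f 0 0 c0] \<open>c0 \<le> 0\<close> by blast
  then show ?thesis by (auto simp: f_def)
qed

lemma bias_le_bias_next:
  assumes "s \<le> N" and "s < N \<Longrightarrow> bias c s \<le> bias c (Suc s)"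
  shows "bias c s \<le> bias_next c s"
  using assms pg by (cases "s < N") (auto simp: bias_next_def intro: convex_bound_ge)

lemma bias_le_Suc: "s < N \<Longrightarrow> bias c s \<le> bias c (Suc s)"
proof (induction c s rule: bias.induct)
  case (1 c s)
  define \<delta> where "\<delta> = bias c s - bias c (Suc s)"
  \<comment> \<open>The age cost rises by 1 from s to s + 1, while the nonexpansive min passes on at most
    the drop (1 - pg) \<delta> of bias_next; so \<delta> > 0 is impossible.\<close>
  have next_Suc: "bias c (Suc s) \<le> bias_next c (Suc s)"
    using "1" by (intro bias_le_bias_next) auto
  have next_s: "bias_next c s = bias c (Suc s) + (1 - pg) * \<delta>"
    using "1.prems" by (simp add: bias_next_def \<delta>_def algebra_simps)
  have "\<delta> + 1 = min (bias_next c s) (lam + ps * c + (1 - ps) * bias_next c s)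
      - min (bias_next c (Suc s)) (lam + ps * c + (1 - ps) * bias_next c (Suc s))"
    using bias_optimality[of s c] bias_optimality[of "Suc s" c] "1.prems" by (simp add: \<delta>_def)
  also have "\<dots> \<le> max 0 (bias_next c s - bias_next c (Suc s))"
    using ps by (intro min_affine_diff_le) auto
  also have "\<dots> \<le> max 0 ((1 - pg) * \<delta>)"
    using next_s next_Suc by simp
  also have "\<dots> \<le> max 0 \<delta>"
    using pg by (cases "0 \<le> \<delta>") (auto simp: mult_left_le_one_le mult_nonneg_nonpos)
  finally have "\<delta> + 1 \<le> max 0 \<delta>" .
  then show ?case by (simp add: \<delta>_def max_def split: if_splits)
qed

lemma bias_mono: "s \<le> t \<Longrightarrow> t \<le> N \<Longrightarrow> bias c s \<le> bias c t"
proof (induction t rule: dec_induct)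
  case (step t)
  then show ?case using bias_le_Suc[of t c] by simp
qed simp

lemma bias_next_mono: "s \<le> t \<Longrightarrow> t \<le> N \<Longrightarrow> bias_next c s \<le> bias_next c t"
proof (induction t rule: dec_induct)
  case (step t)
  have "bias_next c t \<le> bias c (Suc t)"
    using step bias_le_Suc[of t c] pg by (auto simp: bias_next_def intro: convex_bound_le)
  also have "\<dots> \<le> bias_next c (Suc t)"
    using step bias_le_Suc[of "Suc t" c] by (intro bias_le_bias_next) auto
  finally show ?case using step by simp
qed simp

lemma exists_bias_next_threshold: "\<exists>D. \<forall>s\<le>N. D \<le> s \<longleftrightarrow> lam + ps * c \<le> ps * bias_next c s"
proof (rule upward_closed_threshold)
  fix s t assume "s \<le> t" "t \<le> N" "lam + ps * c \<le> ps * bias_next c s"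
  then show "lam + ps * c \<le> ps * bias_next c t"
    using bias_next_mono[of s t c] ps by (meson less_imp_le mult_left_mono order_trans)
qed

lemma sum_vaoi_trans_bias:
  assumes reset: "pg * bias c 1 + (1 - pg) * bias c 0 = c" and "s \<le> N" "a \<le> 1"
  shows "real s + lam * real a + (\<Sum>s'\<in>{0..N}. vaoi_trans ps pg N s a s' * bias c s') =
    real s + (if a = 0 then bias_next c s else lam + ps * c + (1 - ps) * bias_next c s)"
  using sum_vaoi_trans[OF assms(2) N_pos, of ps pg a "bias c"] reset assms(3)
  by (cases a) (auto simp: bias_next_def)

lemma bias_subsolution:
  assumes "pg * bias c 1 + (1 - pg) * bias c 0 = c" and "s \<le> N" "a \<le> 1"
  shows "bias c s + gain c \<le>
    real s + lam * real a + (\<Sum>s'\<in>{0..N}. vaoi_trans ps pg N s a s' * bias c s')"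
  using sum_vaoi_trans_bias[OF assms] bias_optimality[OF \<open>s \<le> N\<close>, of c] by auto

lemma bias_solution_threshold:
  assumes "pg * bias c 1 + (1 - pg) * bias c 0 = c" and "s \<le> N"
    and D: "\<forall>s\<le>N. D \<le> s \<longleftrightarrow> lam + ps * c \<le> ps * bias_next c s"
  shows "real s + lam * real (if D \<le> s then 1 else 0) +
    (\<Sum>s'\<in>{0..N}. vaoi_trans ps pg N s (if D \<le> s then 1 else 0) s' * bias c s') = bias c s + gain c"
  using sum_vaoi_trans_bias[OF assms(1,2), of "if D \<le> s then 1 else 0"] bias_optimality[OF assms(2), of c]
    D assms(2) by (auto simp: min_def algebra_simps)

end

theorem proposition5:
  fixes ps pg lam :: real and Dmax :: nat
  assumes "0 < ps" "ps < 1" "0 < pg" "pg < 1" "0 \<le> lam" "1 \<le> Dmax"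
  shows "\<exists>DT::nat. \<forall>\<pi>. valid_policy \<pi> \<longrightarrow>
           (\<forall>s\<le>Dmax. avg_cost ps pg Dmax lam (threshold_policy DT) s
                        \<le> avg_cost ps pg Dmax lam \<pi> s)"
proof -
  interpret vaoi_mdp ps pg lam Dmax
    using assms by unfold_locales
  obtain c where reset: "pg * bias c 1 + (1 - pg) * bias c 0 = c"
    using exists_bias_reset_fixpoint by blast
  obtain D where D: "\<forall>s\<le>Dmax. D \<le> s \<longleftrightarrow> lam + ps * c \<le> ps * bias_next c s"
    using exists_bias_next_threshold by blast
  show ?thesis
  proof (intro exI allI impI)
    fix \<pi> s assume "valid_policy \<pi>" "s \<le> Dmax"
    have "avg_cost ps pg Dmax lam (threshold_policy D) s \<le> ereal (gain c)"
      using exp_cost_threshold_le[OF \<open>s \<le> Dmax\<close> bias_solution_threshold[OF reset _ D], of "bias c 0"]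
        bias_mono[of 0 _ c]
      by (intro avg_cost_le[where b = "bias c s - bias c 0"]) (simp add: add_diff_eq)
    also have "\<dots> \<le> avg_cost ps pg Dmax lam \<pi> s"
      using exp_cost_ge[OF \<open>valid_policy \<pi>\<close> \<open>s \<le> Dmax\<close> bias_subsolution[OF reset] bias_nonpos]
      by (intro avg_cost_ge) auto
    finally show "avg_cost ps pg Dmax lam (threshold_policy D) s \<le> avg_cost ps pg Dmax lam \<pi> s" .
  qed
qed

end
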